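(* Let $n\ge 2$, $q\ge 2$ be integers and let $S\subseteq \bigcup_{i=2}^n \mathbb{Z}_q^i$ be a $q$-ary non-overlapping code. Define $\tilde S=\bigcup_{\mathbf{s}\in S}\tilde{\mathbf{s}}$, where $$\tilde{\mathbf{s}}=\{\mathbf{s}\,\|\,\mathrm{suf}(\mathbf{x},n-|\mathbf{s}|) : \mathbf{x}\in S,\ |\mathbf{x}|>n-|\mathbf{s}|\}.$$ Then $\tilde S\subseteq\mathbb{Z}_q^n$ is a fixed-length non-overlapping code of length $n$, i.e. $\mathrm{pre}(\mathbf{u}')\cap\mathrm{suf}(\mathbf{v}')=\emptyset$ for all $\mathbf{u}',\mathbf{v}'\in\tilde S$ (possibly equal).
   Context: $\mathbb{Z}_q=\{0,1,\dots,q-1\}$; words are finite strings over $\mathbb{Z}_q$, $|\mathbf{s}|$ denotes the length of $\mathbf{s}$, and $\mathbf{u}\|\mathbf{v}$ denotes concatenation. For $\mathbf{s}=(s_1,\dots,s_m)$ and $0\le k\le m$, $\mathrm{pre}(\mathbf{s},k)=(s_1,\dots,s_k)$ and $\mathrm{suf}(\mathbf{s},k)=(s_{m-k+1},\dots,s_m)$, with $\mathrm{pre}(\mathbf{s},0)$, $\mathrm{suf}(\mathbf{s},0)$ the empty string. $\mathrm{pre}(\mathbf{s})=\{\mathrm{pre}(\mathbf{s},k):1\le k\le m-1\}$ and $\mathrm{suf}(\mathbf{s})=\{\mathrm{suf}(\mathbf{s},k):1\le k\le m-1\}$. A code $S\subseteq\bigcup_{i=2}^n\mathbb{Z}_q^i$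 is non-overlapping if (1) for all $\mathbf{u},\mathbf{v}\in S$ (possibly equal), $\mathrm{pre}(\mathbf{u})\cap\mathrm{suf}(\mathbf{v})=\emptyset$, and (2) for all distinct $\mathbf{u},\mathbf{v}\in S$ with $|\mathbf{u}|\le|\mathbf{v}|$, $\mathbf{u}$ is not a (contiguous) subword of $\mathbf{v}$, i.e. $\mathbf{u}\neq(v_{j+1},\dots,v_{j+|\mathbf{u}|})$ for all $0\le j\le|\mathbf{v}|-|\mathbf{u}|$. A fixed-length code is one all of whose codewords have the same length; for it condition (2) is automatic. *)

theory Defs
  imports Main
begin

text \<open>Words over Z_q are lists of naturals with all entries < q.\<close>

definition pre_k :: "nat list \<Rightarrow> nat \<Rightarrow> nat list" where
  "pre_k s k = take k s"

definition suf_k :: "nat list \<Rightarrow> nat \<Rightarrow> nat list" where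
  "suf_k s k = drop (length s - k) s"

definition pres :: "nat list \<Rightarrow> nat list set" where
  "pres s = {pre_k s k | k. 1 \<le> k \<and> k \<le> length s - 1}"

definition sufs :: "nat list \<Rightarrow> nat list set" where
  "sufs s = {suf_k s k | k. 1 \<le> k \<and> k \<le> length s - 1}"

definition is_subword :: "nat list \<Rightarrow> nat list \<Rightarrow> bool" where
  "is_subword u v \<longleftrightarrow> (\<exists>j. j + length u \<le> length v \<and> u = take (length u) (drop j v))"

definition code_space :: "nat \<Rightarrow> nat \<Rightarrow> nat list set" where
  "code_space q n = {s. 2 \<le> length s \<and> length s \<le> n \<and> (\<forall>x\<in>set s. x < q)}"

definition non_overlapping :: "nat list set \<Rightarrow> bool" where
  "non_overlapping S \<longleftrightarrow>
     (\<forall>u\<in>S. \<forall>v\<in>S. pres u \<inter> sufs v = {}) \<and>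
     (\<forall>u\<in>S. \<forall>v\<in>S. u \<noteq> v \<and> length u \<le> length v \<longrightarrow> \<not> is_subword u v)"

definition tilde_word :: "nat \<Rightarrow> nat list set \<Rightarrow> nat list \<Rightarrow> nat list set" where
  "tilde_word n S s = {s @ suf_k x (n - length s) | x. x \<in> S \<and> length x > n - length s}"

definition tilde_code :: "nat \<Rightarrow> nat list set \<Rightarrow> nat list set" where
  "tilde_code n S = (\<Union>s\<in>S. tilde_word n S s)"

end

theory Submission
  imports Defs
begin

text \<open>A word \<open>s \<parallel> suf(x, n - |s|)\<close> of the tilde code starts with the codeword \<open>s\<close>,
  and each of its proper suffixes starts with a proper suffix of a codeword (of \<open>x\<close> if the suffix
  lies inside the tail, of \<open>s\<close> otherwise). So a proper prefix of one word that equalled a proper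
  suffix of another would begin both with a codeword \<open>s\<close> and with a proper suffix of a codeword
  \<open>y\<close>: the shorter of the two is either a proper prefix of \<open>s\<close> that is a suffix of \<open>y\<close>, or it is
  \<open>s\<close> itself occurring inside \<open>y\<close>, and non-overlap excludes both.\<close>

lemma non_overlapping_prefix_not_suffix:
  assumes "non_overlapping S" and "s \<in> S" and "y \<in> S"
    and "1 \<le> m" and "m < length y"
    and "take (length s) u = s"
  shows "take m u \<noteq> suf_k y m"
proof
  assume eq: "take m u = suf_k y m"
  show False
  proof (cases "m < length s")
    case True
    have "take m s = take m u" using assms(6) True by (metis min.strict_order_iff take_take)
    then have "pre_k s m \<in> pres s \<inter> sufs y"
      using True assms(4,5) eq unfolding pres_def sufs_def pre_k_def by force
    then show False using assms(1-3) unfolding non_overlapping_def by blast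
  next
    case False
    have "s = take (length s) (take m u)" using False assms(6) by (simp add: min_def)
    then have "s = take (length s) (drop (length y - m) y)" using eq by (simp add: suf_k_def)
    then have "is_subword s y" unfolding is_subword_def
      by (intro exI[of _ "length y - m"]) (use False assms(5) in auto)
    moreover have "s \<noteq> y" "length s \<le> length y" using False assms(5) by auto
    ultimately show False using assms(1-3) unfolding non_overlapping_def by blast
  qed
qed

lemma tilde_codeE:
  assumes "w \<in> tilde_code n S"
  obtains s x where "s \<in> S" "x \<in> S" "n - length s < length x"
    "w = s @ suf_k x (n - length s)"
  using assms unfolding tilde_code_def tilde_word_def by blast

lemma tilde_code_subset_words:
  assumes "S \<subseteq> code_space q n"
  shows "tilde_code n S \<subseteq> {w. length w = n \<and> (\<forall>x\<in>set w. x < q)}"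
proof
  fix w assume "w \<in> tilde_code n S"
  then obtain s x where sx: "s \<in> S" "x \<in> S" "n - length s < length x"
    "w = s @ suf_k x (n - length s)" by (rule tilde_codeE)
  then have "length s \<le> n" "\<forall>c\<in>set s. c < q" "\<forall>c\<in>set x. c < q"
    using assms unfolding code_space_def by auto
  moreover have "set (suf_k x (n - length s)) \<subseteq> set x"
    unfolding suf_k_def by (rule set_drop_subset)
  ultimately show "w \<in> {w. length w = n \<and> (\<forall>x\<in>set w. x < q)}"
    using sx by (auto simp: suf_k_def)
qed

lemma suffix_of_tilde_code_starts_with_suffix:
  assumes "S \<subseteq> code_space q n" and "v \<in> tilde_code n S"
    and "1 \<le> k" and "k < n"
  obtains y m where "y \<in> S" "1 \<le> m" "m < length y" "m \<le> k"
    "take m (suf_k v k) = suf_k y m"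
proof -
  obtain t y where ty: "t \<in> S" "y \<in> S" "n - length t < length y"
    "v = t @ suf_k y (n - length t)"
    using assms(2) by (rule tilde_codeE)
  have "length t \<le> n" "length y \<le> n" using ty(1,2) assms(1) unfolding code_space_def by auto
  define b where "b = suf_k y (n - length t)"
  have lb: "length b = n - length t" using ty(3) unfolding b_def suf_k_def by simp
  have lv: "length v = n" using ty(4) lb \<open>length t \<le> n\<close> by (simp add: b_def)
  show thesis
  proof (cases "k \<le> length b")
    case True
    have "suf_k v k = suf_k b k" using ty(4) True lv unfolding b_def suf_k_def by simp
    also have "\<dots> = suf_k y k"
    proof -
      have "length b - k + (length y - length b) = length y - k" using True lb ty(3) by linarith
      then show ?thesis using lb unfolding b_def suf_k_def by (simp add: add.commute)
    qed
    finally show thesis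
      using that[OF ty(2) assms(3) _ order_refl] True lb ty(3) by (simp add: suf_k_def)
  next
    case False
    define m where "m = k - length b"
    have m: "1 \<le> m" "m < length t" "m \<le> k"
      using False assms(3,4) lb \<open>length t \<le> n\<close> unfolding m_def by auto
    have "suf_k v k = suf_k t m @ b"
      using ty(4) False lv lb m unfolding suf_k_def b_def m_def by (simp add: diff_diff_left)
    then have "take m (suf_k v k) = suf_k t m" using m(2) by (simp add: suf_k_def)
    then show thesis using that[OF ty(1) m] by simp
  qed
qed

theorem mainTheorem2:
  fixes n q :: nat and S :: "nat list set"
  assumes "n \<ge> 2" and "q \<ge> 2"
    and "S \<subseteq> code_space q n"
    and "non_overlapping S"
  shows "tilde_code n S \<subseteq> {w. length w = n \<and> (\<forall>x\<in>set w. x < q)}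
         \<and> (\<forall>u\<in>tilde_code n S. \<forall>v\<in>tilde_code n S. pres u \<inter> sufs v = {})"
proof (intro conjI ballI equals0I)
  show words: "tilde_code n S \<subseteq> {w. length w = n \<and> (\<forall>x\<in>set w. x < q)}"
    using assms(3) by (rule tilde_code_subset_words)
  fix u v w assume u: "u \<in> tilde_code n S" and v: "v \<in> tilde_code n S"
    and w: "w \<in> pres u \<inter> sufs v"
  have "length u = n" "length v = n" using u v words by auto
  obtain k where k: "1 \<le> k" "k < n" "w = take k u"
    using w \<open>length u = n\<close> unfolding pres_def pre_k_def by auto
  moreover obtain k' where "k' \<le> length v - 1" "w = suf_k v k'"
    using w unfolding sufs_def by blast
  moreover have "length (take k u) = k" "length (suf_k v k') = k'"
    using k \<open>length u = n\<close> \<open>k' \<le> length v - 1\<close> by (auto simp: suf_k_def)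
  ultimately have "w = suf_k v k" by metis
  obtain s x where s: "s \<in> S" "u = s @ suf_k x (n - length s)"
    using u by (rule tilde_codeE)
  obtain y m where y: "y \<in> S" "1 \<le> m" "m < length y" "m \<le> k"
    and eq: "take m (suf_k v k) = suf_k y m"
    using suffix_of_tilde_code_starts_with_suffix[OF assms(3) v k(1,2)] .
  have "take m u = suf_k y m" using eq k(3) \<open>w = suf_k v k\<close> y(4) by (metis min.absorb1 take_take)
  moreover have "take (length s) u = s" using s(2) by simp
  ultimately show False
    using non_overlapping_prefix_not_suffix[OF assms(4) s(1) y(1-3)] by blast
qed

end
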